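(* Let $m>0$, $\sigma>0$, and let $\theta$ be the distribution of $|X|$ where $X$ follows the normal law $\mathcal{N}(m,\sigma^2)$, with density $f_\theta(t)=\frac{1}{\sigma\sqrt{2\pi}}\left[\exp\left(-\frac12\left(\frac{t-m}{\sigma}\right)^2\right)+\exp\left(-\frac12\left(\frac{t+m}{\sigma}\right)^2\right)\right]$ for $t\ge0$. Then there exists $t^*\in[0,m)$ such that $f'_\theta(t)>0$ for all $t\in(0,t^* )$ and $f'_\theta(t)<0$ for all $t\in(t^*,\infty)$. Moreover, such $t^*$ satisfies $(t^* )^2\geq m^2-\sigma^2$. *)

theory Defs
  imports "HOL-Analysis.Analysis"
begin

text \<open>Density of the folded normal distribution |X|, X ~ N(m, sigma^2), on t \<ge> 0.
  The same closed-form expression is used for all real t (it is smooth everywhere);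
  only t > 0 matters for the statement.\<close>
definition folded_normal_density :: "real \<Rightarrow> real \<Rightarrow> real \<Rightarrow> real" where
  "folded_normal_density m \<sigma> t =
     (1 / (\<sigma> * sqrt (2 * pi))) *
     (exp (- (1/2) * ((t - m) / \<sigma>)^2) + exp (- (1/2) * ((t + m) / \<sigma>)^2))"

end

theory Submission
  imports Defs
begin

text \<open>Up to a positive factor, the derivative of the density is
  \<open>(m - t) \<phi>(t - m) - (m + t) \<phi>(t + m)\<close> with \<open>\<phi>\<close> the Gaussian kernel. It is negative for
  \<open>t \<ge> m\<close>, and for \<open>0 \<le> t < m\<close> taking logarithms shows that it is positive exactly when
  \<open>k(t) = ln (m + t) - ln (m - t) - 2 t m / \<sigma>\<^sup>2\<close> is negative. Now \<open>k(0) = 0\<close>,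
  \<open>k'(t) = 2 m / (m\<^sup>2 - t\<^sup>2) - 2 m / \<sigma>\<^sup>2\<close> has the sign of \<open>t\<^sup>2 - (m\<^sup>2 - \<sigma>\<^sup>2)\<close>, and
  \<open>k(t) \<rightarrow> \<infinity>\<close> as \<open>t \<rightarrow> m\<close>; so \<open>k\<close> is negative up to a zero \<open>t\<^sup>*\<close> and positive after it.
  Conversely, if the derivative were negative beyond some \<open>t\<^sup>*\<close> with
  \<open>(t\<^sup>*)\<^sup>2 < m\<^sup>2 - \<sigma>\<^sup>2\<close>, it would be negative at \<open>\<surd>(m\<^sup>2 - \<sigma>\<^sup>2)\<close>, where \<open>k < 0\<close>.\<close>

definition folded_mode_gap :: "real \<Rightarrow> real \<Rightarrow> real \<Rightarrow> real" where
  "folded_mode_gap m \<sigma> t = ln (m + t) - ln (m - t) - 2 * t * m / \<sigma>^2"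

lemma has_real_derivative_gaussian_bump:
  assumes "\<sigma> \<noteq> 0"
  shows "((\<lambda>t. exp (- (1/2) * ((t - c) / \<sigma>)^2)) has_real_derivative
           (c - t) / \<sigma>^2 * exp (- (1/2) * ((t - c) / \<sigma>)^2)) (at t)"
  using assms by (auto intro!: derivative_eq_intros simp: field_simps power2_eq_square)

lemma has_real_derivative_folded_normal_density:
  assumes "\<sigma> > 0"
  shows "(folded_normal_density m \<sigma> has_real_derivative
           ((m - t) * exp (- (1/2) * ((t - m) / \<sigma>)^2) - (m + t) * exp (- (1/2) * ((t + m) / \<sigma>)^2))
           / (\<sigma>^3 * sqrt (2 * pi))) (at t)"
proof -
  let ?g = "\<lambda>c. exp (- (1/2) * ((t - c) / \<sigma>)^2)"
  have "((\<lambda>t. exp (- (1/2) * ((t + m) / \<sigma>)^2)) has_real_derivative (- m - t) / \<sigma>^2 * ?g (- m)) (at t)"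
    using has_real_derivative_gaussian_bump[of \<sigma> "- m" t] assms by simp
  then have "(folded_normal_density m \<sigma> has_real_derivative
      1 / (\<sigma> * sqrt (2 * pi)) * ((m - t) / \<sigma>^2 * ?g m + (- m - t) / \<sigma>^2 * ?g (- m))) (at t)"
    unfolding folded_normal_density_def [abs_def]
    using assms by (intro DERIV_cmult DERIV_add has_real_derivative_gaussian_bump) auto
  moreover have "1 / (\<sigma> * sqrt (2 * pi)) * ((m - t) / \<sigma>^2 * X + (- m - t) / \<sigma>^2 * Y)
      = ((m - t) * X - (m + t) * Y) / (\<sigma>^3 * sqrt (2 * pi))" for X Y
    using assms by (simp add: field_simps power3_eq_cube power2_eq_square)
  ultimately show ?thesis
    by simp
qed

lemma deriv_folded_normal_density:
  assumes "\<sigma> > 0"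
  shows "deriv (folded_normal_density m \<sigma>) t =
           ((m - t) * exp (- (1/2) * ((t - m) / \<sigma>)^2) - (m + t) * exp (- (1/2) * ((t + m) / \<sigma>)^2))
           / (\<sigma>^3 * sqrt (2 * pi))"
  using has_real_derivative_folded_normal_density[OF assms] by (rule DERIV_imp_deriv)

lemma ln_folded_slope_ratio:
  assumes "\<sigma> > 0" "\<bar>t\<bar> < m"
  shows "ln ((m + t) * exp (- (1/2) * ((t + m) / \<sigma>)^2)) - ln ((m - t) * exp (- (1/2) * ((t - m) / \<sigma>)^2))
         = folded_mode_gap m \<sigma> t"
proof -
  have "m + t > 0" "m - t > 0"
    using assms(2) by auto
  then show ?thesis
    using assms(1) by (simp add: folded_mode_gap_def ln_mult, simp add: field_simps power2_eq_square)
qed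

lemma folded_slope_terms_compare:
  assumes "m > 0" "\<sigma> > 0" "t \<ge> 0"
  defines "A \<equiv> (m - t) * exp (- (1/2) * ((t - m) / \<sigma>)^2)"
    and "B \<equiv> (m + t) * exp (- (1/2) * ((t + m) / \<sigma>)^2)"
  shows "B < A \<longleftrightarrow> t < m \<and> folded_mode_gap m \<sigma> t < 0"
    and "A < B \<longleftrightarrow> m \<le> t \<or> folded_mode_gap m \<sigma> t > 0"
proof -
  have "(B < A \<longleftrightarrow> t < m \<and> folded_mode_gap m \<sigma> t < 0) \<and>
        (A < B \<longleftrightarrow> m \<le> t \<or> folded_mode_gap m \<sigma> t > 0)"
  proof (cases "t < m")
    case True
    then have "A > 0" "B > 0"
      using assms unfolding A_def B_def by auto
    moreover have "ln B - ln A = folded_mode_gap m \<sigma> t"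
      unfolding A_def B_def using True assms by (intro ln_folded_slope_ratio) auto
    ultimately show ?thesis
      using True ln_less_cancel_iff[of B A] ln_less_cancel_iff[of A B] by linarith
  next
    case False
    then have "A \<le> 0" "B > 0"
      using assms unfolding A_def B_def by (auto simp: mult_nonpos_nonneg)
    then show ?thesis
      using False by simp
  qed
  then show "B < A \<longleftrightarrow> t < m \<and> folded_mode_gap m \<sigma> t < 0"
    and "A < B \<longleftrightarrow> m \<le> t \<or> folded_mode_gap m \<sigma> t > 0"
    by auto
qed

lemma deriv_folded_normal_density_pos_iff:
  assumes "m > 0" "\<sigma> > 0" "t \<ge> 0"
  shows "deriv (folded_normal_density m \<sigma>) t > 0 \<longleftrightarrow> t < m \<and> folded_mode_gap m \<sigma> t < 0"
proof -
  have "\<sigma>^3 * sqrt (2 * pi) > 0"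
    using assms(2) by simp
  then show ?thesis
    using deriv_folded_normal_density[OF assms(2)] folded_slope_terms_compare(1)[OF assms]
    by (simp add: zero_less_divide_iff)
qed

lemma deriv_folded_normal_density_neg_iff:
  assumes "m > 0" "\<sigma> > 0" "t \<ge> 0"
  shows "deriv (folded_normal_density m \<sigma>) t < 0 \<longleftrightarrow> m \<le> t \<or> folded_mode_gap m \<sigma> t > 0"
proof -
  have "\<sigma>^3 * sqrt (2 * pi) > 0"
    using assms(2) by simp
  then show ?thesis
    using deriv_folded_normal_density[OF assms(2)] folded_slope_terms_compare(2)[OF assms]
    by (simp add: divide_less_0_iff)
qed

lemma folded_mode_gap_zero [simp]: "folded_mode_gap m \<sigma> 0 = 0"
  by (simp add: folded_mode_gap_def)

lemma has_real_derivative_folded_mode_gap: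
  assumes "\<sigma> > 0" "\<bar>t\<bar> < m"
  shows "(folded_mode_gap m \<sigma> has_real_derivative 2 * m / (m^2 - t^2) - 2 * m / \<sigma>^2) (at t)"
proof -
  have pos: "m + t > 0" "m - t > 0"
    using assms(2) by auto
  then have "(folded_mode_gap m \<sigma> has_real_derivative 1 / (m + t) + 1 / (m - t) - 2 * m / \<sigma>^2) (at t)"
    unfolding folded_mode_gap_def [abs_def]
    using assms(1) by (auto intro!: derivative_eq_intros simp: power4_eq_xxxx power2_eq_square)
  moreover have "1 / (m + t) + 1 / (m - t) = 2 * m / (m^2 - t^2)"
    using pos by (simp add: field_simps power2_eq_square)
  ultimately show ?thesis
    by simp
qed

lemma continuous_on_folded_mode_gap:
  assumes "\<sigma> > 0" "\<bar>a\<bar> < m" "\<bar>b\<bar> < m"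
  shows "continuous_on {a..b} (folded_mode_gap m \<sigma>)"
  unfolding folded_mode_gap_def [abs_def]
  using assms by (intro continuous_intros) auto

lemma folded_mode_gap_strict_mono:
  assumes "\<sigma> > 0" "0 \<le> a" "a < b" "b < m" "m^2 - \<sigma>^2 \<le> a^2"
  shows "folded_mode_gap m \<sigma> a < folded_mode_gap m \<sigma> b"
proof (rule DERIV_pos_imp_increasing_open[OF \<open>a < b\<close>])
  fix x assume x: "a < x" "x < b"
  then have "0 < m^2 - x^2" "m^2 - x^2 < \<sigma>^2"
    using assms power_strict_mono[of a x 2] power_strict_mono[of x m 2] by auto
  then have "2 * m / \<sigma>^2 < 2 * m / (m^2 - x^2)"
    using assms by (intro divide_strict_left_mono) auto
  then show "\<exists>y. DERIV (folded_mode_gap m \<sigma>) x :> y \<and> y > 0"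
    using x assms has_real_derivative_folded_mode_gap[of \<sigma> x m] by force
next
  show "continuous_on {a..b} (folded_mode_gap m \<sigma>)"
    using assms by (intro continuous_on_folded_mode_gap) auto
qed

lemma folded_mode_gap_strict_antimono:
  assumes "m > 0" "\<sigma> > 0" "0 \<le> a" "a < b" "b^2 \<le> m^2 - \<sigma>^2"
  shows "folded_mode_gap m \<sigma> b < folded_mode_gap m \<sigma> a"
proof -
  have "b^2 < m^2"
    using assms by (smt (verit) zero_less_power)
  then have "b < m"
    using assms by (auto intro: power_less_imp_less_base)
  show ?thesis
  proof (rule DERIV_neg_imp_decreasing_open[OF \<open>a < b\<close>])
    fix x assume x: "a < x" "x < b"
    then have "\<sigma>^2 < m^2 - x^2" "0 < m^2 - x^2"
      using assms power_strict_mono[of x b 2] \<open>b^2 < m^2\<close> by auto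
    then have "2 * m / (m^2 - x^2) < 2 * m / \<sigma>^2"
      using assms \<open>b < m\<close> by (intro divide_strict_left_mono) auto
    then show "\<exists>y. DERIV (folded_mode_gap m \<sigma>) x :> y \<and> y < 0"
      using x assms \<open>b < m\<close> has_real_derivative_folded_mode_gap[of \<sigma> x m] by force
  next
    show "continuous_on {a..b} (folded_mode_gap m \<sigma>)"
      using assms \<open>b < m\<close> by (intro continuous_on_folded_mode_gap) auto
  qed
qed

lemma folded_mode_gap_neg:
  assumes "m > 0" "\<sigma> > 0" "0 < t" "t^2 \<le> m^2 - \<sigma>^2"
  shows "folded_mode_gap m \<sigma> t < 0"
  using folded_mode_gap_strict_antimono[of m \<sigma> 0 t] assms by simp

lemma folded_mode_gap_pos_near_mean:
  assumes "m > 0" "\<sigma> > 0"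
  obtains t where "0 < t" "t < m" "folded_mode_gap m \<sigma> t > 0"
proof
  define t where "t = m - m * exp (- (2 * m^2 / \<sigma>^2 + 1))"
  have "0 < 2 * m^2 / \<sigma>^2 + 1"
    by (simp add: add_nonneg_pos)
  then have "exp (- (2 * m^2 / \<sigma>^2 + 1)) < 1"
    by simp
  then show "0 < t" "t < m"
    using assms unfolding t_def by auto
  have "ln (m - t) = ln m - (2 * m^2 / \<sigma>^2 + 1)"
    unfolding t_def using assms by (simp add: ln_mult)
  moreover have "ln m < ln (m + t)"
    using \<open>0 < t\<close> assms by simp
  moreover have "2 * t * m / \<sigma>^2 < 2 * m^2 / \<sigma>^2"
    using \<open>t < m\<close> assms by (simp add: divide_strict_right_mono power2_eq_square)
  ultimately show "folded_mode_gap m \<sigma> t > 0"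
    unfolding folded_mode_gap_def by linarith
qed

lemma folded_mode_gap_sign_change:
  assumes "m > 0" "\<sigma> > 0"
  obtains ts where "0 \<le> ts" "ts < m"
    "\<And>t. 0 < t \<Longrightarrow> t < ts \<Longrightarrow> folded_mode_gap m \<sigma> t < 0"
    "\<And>t. ts < t \<Longrightarrow> t < m \<Longrightarrow> folded_mode_gap m \<sigma> t > 0"
proof -
  \<comment> \<open>the minimiser of the gap on \<open>[0, m)\<close>\<close>
  define t0 where "t0 = sqrt (max 0 (m^2 - \<sigma>^2))"
  have t0: "0 \<le> t0" "m^2 - \<sigma>^2 \<le> t0^2"
    unfolding t0_def by auto
  have below_t0: "folded_mode_gap m \<sigma> t < 0" if "0 < t" "t \<le> t0" for t
  proof -
    have "0 < t^2" "t^2 \<le> t0^2"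
      using that by (auto intro: power_mono)
    then have "t^2 \<le> m^2 - \<sigma>^2"
      unfolding t0_def by (simp add: max_def split: if_splits)
    then show ?thesis
      using folded_mode_gap_neg that assms by blast
  qed
  have "folded_mode_gap m \<sigma> t0 \<le> 0"
    using below_t0[of t0] t0 by (cases "t0 = 0") auto
  moreover obtain t1 where t1: "0 < t1" "t1 < m" "folded_mode_gap m \<sigma> t1 > 0"
    using folded_mode_gap_pos_near_mean assms by blast
  moreover have "t0 < t1"
    using below_t0[of t1] t1 by force
  ultimately obtain ts where ts: "t0 \<le> ts" "ts \<le> t1" "folded_mode_gap m \<sigma> ts = 0"
    using IVT'[of "folded_mode_gap m \<sigma>" t0 0 t1] continuous_on_folded_mode_gap[of \<sigma> t0 m t1] assms t0
    by auto
  have "m^2 - \<sigma>^2 \<le> ts^2"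
    using t0 ts power_mono[of t0 ts 2] by linarith
  show thesis
  proof
    show "0 \<le> ts" "ts < m"
      using t0 ts t1 by auto
  next
    fix t assume "0 < t" "t < ts"
    show "folded_mode_gap m \<sigma> t < 0"
    proof (cases "t \<le> t0")
      case False
      then have "m^2 - \<sigma>^2 \<le> t^2"
        using t0 power_mono[of t0 t 2] by linarith
      then show ?thesis
        using folded_mode_gap_strict_mono[of \<sigma> t ts m] \<open>0 < t\<close> \<open>t < ts\<close> ts t1 assms by simp
    qed (use below_t0 \<open>0 < t\<close> in auto)
  next
    fix t assume "ts < t" "t < m"
    then show "folded_mode_gap m \<sigma> t > 0"
      using folded_mode_gap_strict_mono[of \<sigma> ts t m] \<open>m^2 - \<sigma>^2 \<le> ts^2\<close> ts t0 assms by simp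
  qed
qed

lemma folded_normal_density_unimodal:
  assumes "m > 0" "\<sigma> > 0"
  obtains ts where "0 \<le> ts" "ts < m"
    "\<And>t. 0 < t \<Longrightarrow> t < ts \<Longrightarrow> deriv (folded_normal_density m \<sigma>) t > 0"
    "\<And>t. ts < t \<Longrightarrow> deriv (folded_normal_density m \<sigma>) t < 0"
proof -
  obtain ts where ts: "0 \<le> ts" "ts < m"
    "\<And>t. 0 < t \<Longrightarrow> t < ts \<Longrightarrow> folded_mode_gap m \<sigma> t < 0"
    "\<And>t. ts < t \<Longrightarrow> t < m \<Longrightarrow> folded_mode_gap m \<sigma> t > 0"
    using folded_mode_gap_sign_change[OF assms] by metis
  show thesis
  proof
    fix t assume "ts < t"
    then show "deriv (folded_normal_density m \<sigma>) t < 0"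
      using deriv_folded_normal_density_neg_iff[OF assms, of t] ts by (cases "t < m") auto
  qed (use ts deriv_folded_normal_density_pos_iff[OF assms] in auto)
qed

lemma folded_normal_density_mode_lower_bound:
  assumes "m > 0" "\<sigma> > 0" "0 \<le> ts"
    and decreasing: "\<And>t. ts < t \<Longrightarrow> deriv (folded_normal_density m \<sigma>) t < 0"
  shows "m^2 - \<sigma>^2 \<le> ts^2"
proof (rule ccontr)
  assume "\<not> m^2 - \<sigma>^2 \<le> ts^2"
  then have "ts^2 < m^2 - \<sigma>^2"
    by simp
  moreover have "0 \<le> ts^2"
    by simp
  ultimately have "0 < m^2 - \<sigma>^2"
    by linarith
  define t0 where "t0 = sqrt (m^2 - \<sigma>^2)"
  have "t0^2 = m^2 - \<sigma>^2"
    unfolding t0_def using \<open>0 < m^2 - \<sigma>^2\<close> by simp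
  have "ts < t0"
    unfolding t0_def using \<open>ts^2 < m^2 - \<sigma>^2\<close> by (rule real_less_rsqrt)
  have "t0^2 < m^2"
    using \<open>t0^2 = m^2 - \<sigma>^2\<close> assms(2) by simp
  then have "t0 < m"
    using assms(1) by (rule power_less_imp_less_base[OF _ less_imp_le])
  have "folded_mode_gap m \<sigma> t0 < 0"
    using \<open>ts < t0\<close> \<open>t0^2 = m^2 - \<sigma>^2\<close> assms by (intro folded_mode_gap_neg) auto
  then have "deriv (folded_normal_density m \<sigma>) t0 > 0"
    using deriv_folded_normal_density_pos_iff[OF assms(1,2), of t0] \<open>ts < t0\<close> \<open>t0 < m\<close> assms(3)
    by simp
  with decreasing[OF \<open>ts < t0\<close>] show False
    by simp
qed

theorem mainTheorem3:
  fixes m \<sigma> :: real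
  assumes "m > 0" and "\<sigma> > 0"
  shows "(\<exists>ts. 0 \<le> ts \<and> ts < m \<and>
            (\<forall>t. 0 < t \<and> t < ts \<longrightarrow> deriv (folded_normal_density m \<sigma>) t > 0) \<and>
            (\<forall>t. ts < t \<longrightarrow> deriv (folded_normal_density m \<sigma>) t < 0))
       \<and> (\<forall>ts. 0 \<le> ts \<and> ts < m \<and>
            (\<forall>t. 0 < t \<and> t < ts \<longrightarrow> deriv (folded_normal_density m \<sigma>) t > 0) \<and>
            (\<forall>t. ts < t \<longrightarrow> deriv (folded_normal_density m \<sigma>) t < 0)
            \<longrightarrow> ts^2 \<ge> m^2 - \<sigma>^2)"
proof (intro conjI allI impI)
  obtain ts where "0 \<le> ts" "ts < m"
    "\<And>t. 0 < t \<Longrightarrow> t < ts \<Longrightarrow> deriv (folded_normal_density m \<sigma>) t > 0"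
    "\<And>t. ts < t \<Longrightarrow> deriv (folded_normal_density m \<sigma>) t < 0"
    using folded_normal_density_unimodal[OF assms] by metis
  then show "\<exists>ts. 0 \<le> ts \<and> ts < m \<and>
            (\<forall>t. 0 < t \<and> t < ts \<longrightarrow> deriv (folded_normal_density m \<sigma>) t > 0) \<and>
            (\<forall>t. ts < t \<longrightarrow> deriv (folded_normal_density m \<sigma>) t < 0)"
    by blast
next
  fix ts
  assume "0 \<le> ts \<and> ts < m \<and>
            (\<forall>t. 0 < t \<and> t < ts \<longrightarrow> deriv (folded_normal_density m \<sigma>) t > 0) \<and>
            (\<forall>t. ts < t \<longrightarrow> deriv (folded_normal_density m \<sigma>) t < 0)"
  then show "ts^2 \<ge> m^2 - \<sigma>^2"
    using folded_normal_density_mode_lower_bound[OF assms] by blast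
qed

end
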